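(* Let $\mathcal D^S$ denote the class of all functions $d:\mathbb{R}^n\times\mathbb{R}^n\to\mathbb{R}$ of the form $$d(x,y)=\phi(x)-\phi(y)-\langle s(y),\,x-y\rangle\qquad(x,y\in\mathbb{R}^n),$$ where $\phi:\mathbb{R}^n\to\mathbb{R}$ is a (finite-valued) convex function and $s:\mathbb{R}^n\to\mathbb{R}^n$ is a subgradient map of $\phi$, i.e. $s(y)\in\partial\phi(y)$ for every $y$. Let $d:\mathbb{R}^n\times\mathbb{R}^n\to\mathbb{R}$ be a divergence, i.e. $d(x,y)\ge 0$ for all $x,y$ and $d(y,y)=0$ for all $y$. Then $d\in\mathcal D^S$ if and only if both of the following hold: (i) for every $a\in\mathbb{R}^n$, the map $x\mapsto d(x,a)$ is convex; (ii) for every $a,b\in\mathbb{R}^n$, the map $x\mapsto d(x,a)-d(x,b)$ is affine, i.e. of the form $x\mapsto\langle h,x\rangle+c$ for some $h\in\mathbb{R}^n$ and $c\in\mathbb{R}$.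
   Context: $\partial\phi(y)=\{g\in\mathbb{R}^n:\ \phi(x)\ge\phi(y)+\langle g,x-y\rangle\ \forall x\}$ denotes the subdifferential of the convex function $\phi$ at $y$. The divergences in $\mathcal D^S$ are called generalized Bregman divergences. *)

theory Defs
  imports "HOL-Analysis.Analysis"
begin

definition subdifferential :: "(real^'n \<Rightarrow> real) \<Rightarrow> real^'n \<Rightarrow> (real^'n) set" where
  "subdifferential \<phi> y = {g. \<forall>x. \<phi> x \<ge> \<phi> y + inner g (x - y)}"

definition divergence :: "(real^'n \<Rightarrow> real^'n \<Rightarrow> real) \<Rightarrow> bool" where
  "divergence d \<longleftrightarrow> (\<forall>x y. d x y \<ge> 0) \<and> (\<forall>y. d y y = 0)"

definition gen_bregman :: "(real^'n \<Rightarrow> real^'n \<Rightarrow> real) set" where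
  "gen_bregman = {d. \<exists>\<phi> s. convex_on UNIV \<phi> \<and> (\<forall>y. s y \<in> subdifferential \<phi> y) \<and>
       (\<forall>x y. d x y = \<phi> x - \<phi> y - inner (s y) (x - y))}"

end

theory Submission
  imports Defs
begin

(*
  For fixed y this is \<phi> minus an affine function of x, hence convex in x, and the difference
  of two such sections is affine because the \<phi> x terms cancel.

  Conversely, if all sections x \<mapsto> d x a are convex and all differences of sections are
  affine, put \<phi> x = d x 0.  Writing d x y - d x 0 = <h y, x> + c y and evaluating at x = y
  (where d y y = 0) determines c y, which yields the Bregman form of d with slope s y = - h y.
  Nonnegativity of d then says exactly that s y is a subgradient of \<phi> at y.
*)

lemma concave_on_inner_affine:
  fixes g :: "'a::real_inner"
  assumes "convex S"
  shows "concave_on S (\<lambda>x. inner g x + c)"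
  unfolding concave_on_def
proof (rule convex_onI)
  fix t :: real and x y :: 'a
  show "- (inner g ((1 - t) *\<^sub>R x + t *\<^sub>R y) + c)
      \<le> (1 - t) * - (inner g x + c) + t * - (inner g y + c)"
    by (simp add: inner_add_right algebra_simps)
qed (rule assms)

lemma convex_on_minus_inner_affine:
  fixes \<phi> :: "'a::real_inner \<Rightarrow> real"
  assumes "convex_on S \<phi>" and "convex S"
  shows "convex_on S (\<lambda>x. \<phi> x - (inner g x + c))"
  using convex_on_diff[OF assms(1) concave_on_inner_affine[OF assms(2)]] .

lemma bregman_form_section_convex:
  fixes \<phi> :: "'a::real_inner \<Rightarrow> real"
  assumes "convex_on UNIV \<phi>"
  shows "convex_on UNIV (\<lambda>x. \<phi> x - \<phi> y - inner g (x - y))"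
proof -
  have "(\<lambda>x. \<phi> x - \<phi> y - inner g (x - y)) = (\<lambda>x. \<phi> x - (inner g x + (\<phi> y - inner g y)))"
    by (simp add: inner_diff_right algebra_simps)
  then show ?thesis
    using convex_on_minus_inner_affine[OF assms convex_UNIV] by simp
qed

lemma bregman_form_difference_affine:
  fixes \<phi> :: "'a::real_inner \<Rightarrow> real"
  shows "(\<phi> x - \<phi> a - inner (s a) (x - a)) - (\<phi> x - \<phi> b - inner (s b) (x - b))
       = inner (s b - s a) x + (\<phi> b - \<phi> a + inner (s a) a - inner (s b) b)"
  by (simp add: inner_diff_right inner_diff_left algebra_simps)

lemma nonneg_bregman_form_subgradient:
  fixes \<phi> :: "real^'n \<Rightarrow> real"
  assumes "\<And>x. \<phi> x - \<phi> y - inner g (x - y) \<ge> 0"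
  shows "g \<in> subdifferential \<phi> y"
  unfolding subdifferential_def using assms by (simp add: algebra_simps)

lemma gen_bregman_sections:
  fixes d :: "real^'n \<Rightarrow> real^'n \<Rightarrow> real"
  assumes "d \<in> gen_bregman"
  shows "(\<forall>a. convex_on UNIV (\<lambda>x. d x a)) \<and>
         (\<forall>a b. \<exists>h c. \<forall>x. d x a - d x b = inner h x + c)"
proof -
  obtain \<phi> s where cvx: "convex_on UNIV \<phi>"
    and d_eq: "\<And>x y. d x y = \<phi> x - \<phi> y - inner (s y) (x - y)"
    using assms unfolding gen_bregman_def by blast
  have "convex_on UNIV (\<lambda>x. d x a)" for a
    using bregman_form_section_convex[OF cvx] by (simp add: d_eq)
  moreover have "\<exists>h c. \<forall>x. d x a - d x b = inner h x + c" for a b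
    unfolding d_eq bregman_form_difference_affine by blast
  ultimately show ?thesis by blast
qed

text \<open>A divergence whose section differences are affine is a Bregman form with potential
  \<open>\<lambda>x. d x 0\<close>: the affine part is pinned down by the vanishing of d on the diagonal.\<close>
lemma divergence_bregman_representation:
  fixes d :: "'a::real_inner \<Rightarrow> 'a \<Rightarrow> real"
  assumes diag: "\<And>y. d y y = 0"
    and affine_diff: "\<And>y. \<exists>h c. \<forall>x. d x y - d x 0 = inner h x + c"
  obtains s where "\<And>x y. d x y = d x 0 - d y 0 - inner (s y) (x - y)"
proof -
  obtain h c where hc: "\<And>y x. d x y - d x 0 = inner (h y) x + c y"
    using affine_diff by metis
  have c_eq: "c y = - d y 0 - inner (h y) y" for y
    using hc[of y y] diag[of y] by simp
  have "d x y = d x 0 - d y 0 - inner (- h y) (x - y)" for x y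
    using hc[where y = y and x = x] c_eq[of y] by (simp add: inner_diff_right algebra_simps)
  then show ?thesis by (rule that)
qed

lemma sections_gen_bregman:
  fixes d :: "real^'n \<Rightarrow> real^'n \<Rightarrow> real"
  assumes "divergence d"
    and convex_sections: "\<forall>a. convex_on UNIV (\<lambda>x. d x a)"
    and affine_diff: "\<forall>a b. \<exists>h c. \<forall>x. d x a - d x b = inner h x + c"
  shows "d \<in> gen_bregman"
proof -
  define \<phi> where "\<phi> x = d x 0" for x
  have nonneg: "\<And>x y. d x y \<ge> 0" and diag: "\<And>y. d y y = 0"
    using assms(1) unfolding divergence_def by auto
  have affine_diff_0: "\<And>y. \<exists>h c. \<forall>x. d x y - d x 0 = inner h x + c"
    using affine_diff by blast
  obtain s where "\<And>x y. d x y = d x 0 - d y 0 - inner (s y) (x - y)"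
    using divergence_bregman_representation[of d, OF diag affine_diff_0] by blast
  then have d_eq: "\<And>x y. d x y = \<phi> x - \<phi> y - inner (s y) (x - y)"
    unfolding \<phi>_def .
  have "convex_on UNIV \<phi>"
    using convex_sections unfolding \<phi>_def by simp
  moreover have "s y \<in> subdifferential \<phi> y" for y
    using nonneg d_eq by (intro nonneg_bregman_form_subgradient) metis
  ultimately show ?thesis
    unfolding gen_bregman_def using d_eq by blast
qed

theorem theorem1:
  fixes d :: "real^'n \<Rightarrow> real^'n \<Rightarrow> real"
  assumes "divergence d"
  shows "d \<in> gen_bregman \<longleftrightarrow>
    ((\<forall>a. convex_on UNIV (\<lambda>x. d x a)) \<and>
     (\<forall>a b. \<exists>h c. \<forall>x. d x a - d x b = inner h x + c))"
  using gen_bregman_sections sections_gen_bregman[OF assms] by blast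

end
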